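(* Let $\mathcal{G}=(\mathcal{V},\mathcal{E})$ be a finite tree with root $r$, edges oriented away from $r$, and incidence matrix $\Omega$. Let $f:[0,1]\to\mathcal{P}(\mathcal{V})$ be continuously differentiable with tails $F(t)_x$. Put $s(t)=\sum_{x\in\mathcal{V}}|\partial_t F(t)_x|$. (i) For every $t\in[0,1]$, $s(t)=|\dot f|_{W_1}(t)$. (ii) Suppose moreover that $f$ is a constant speed $W_1$-geodesic with $f(0)\neq f(1)$. Then $s(t)=W_1(f(0),f(1))>0$ for all $t$. Define the constant speed solution by $$v(t)_k=\operatorname{sign}(\partial_tF(t)_{\lceil k\rceil})\,s(t),\qquad g(t)_k=|\partial_tF(t)_{\lceil k\rceil}|/s(t).$$ Then $(f,v,g)$ satisfies the discrete transport equation, and $\mathcal{I}_q(v,g)=W_1(f(0),f(1))$ for every $q\ge 1$.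
   Context: For a finite graph $\mathcal{G}=(\mathcal{V},\mathcal{E})$ whose edges have been given an orientation, each edge $k$ goes from its tail vertex $\lfloor k\rfloor$ to its head vertex $\lceil k\rceil$. The incidence matrix $\Omega=(\omega_{x,k})$ has $\omega_{x,k}=1$ if $x=\lceil k\rceil$, $\omega_{x,k}=-1$ if $x=\lfloor k\rfloor$, and $\omega_{x,k}=0$ otherwise. $\mathcal{P}(\mathcal{V})$ and $\mathcal{P}(\mathcal{E})$ denote probability vectors on $\mathcal{V}$ and on $\mathcal{E}$. $W_1$ is the Wasserstein-1 distance on $\mathcal{P}(\mathcal{V})$ for the cost $d(x,y)$ equal to the shortest-path distance in the underlying undirected graph (unit edge lengths): $W_1(\mu,\nu)=\min_{\pi}\sum_{x,y}d(x,y)\pi(x,y)$, the minimum taken over couplings $\pi$ of $\mu$ and $\nu$. A path $f:[0,1]\to\mathcal{P}(\mathcal{V})$ is a constant speed $W_1$-geodesic if $W_1(f(s),f(t))=|s-t|\,W_1(f(0),f(1))$ for all $s,t\in[0,1]$. Its metric speed is $|\dot f|_{W_1}(t)=\lim_{h\to0}W_1(f(t+h),f(t))/|h|$. A triple $(f,v,g)$ consists of an absolutely continuous $f:[0,1]\to\mathcal{P}(\mathcal{V})$, a measurable $v:[0,1]\to\mathbb{R}^{\mathcal{E}}$ and a measurable $g:[0,1]\to\mathcal{P}(\mathcal{E})$. It satisfies the discrete transport equation if $\partial_t f(t)_x=\sum_{k}\omega_{x,k}v(t)_kg(t)_k$ for a.e. $t$ and all $x$. For $q\ge1$, $\mathcal{I}_q(v,g)=\big(\int_0^1\sum_{k\in\mathcal{E}}g(t)_k|v(t)_k|^q\,dt\big)^{1/q}$.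 For a tree rooted at $r$ with edges oriented away from $r$, $U(x)$ is the vertex set of the subtree rooted at $x$ (including $x$), and $F(t)_x=\sum_{y\in U(x)}f(t)_y$. *)

theory Defs
  imports "HOL-Analysis.Analysis"
begin

definition digraph :: "'a set \<Rightarrow> 'e set \<Rightarrow> ('e \<Rightarrow> 'a) \<Rightarrow> ('e \<Rightarrow> 'a) \<Rightarrow> bool" where
  "digraph V E tail head \<longleftrightarrow> finite V \<and> finite E \<and> V \<noteq> {} \<and>
     (\<forall>k\<in>E. tail k \<in> V \<and> head k \<in> V \<and> tail k \<noteq> head k)"

definition uadj :: "'e set \<Rightarrow> ('e \<Rightarrow> 'a) \<Rightarrow> ('e \<Rightarrow> 'a) \<Rightarrow> ('a \<times> 'a) set" where
  "uadj E tail head = {(tail k, head k) | k. k \<in> E} \<union> {(head k, tail k) | k. k \<in> E}"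

definition gdist :: "'e set \<Rightarrow> ('e \<Rightarrow> 'a) \<Rightarrow> ('e \<Rightarrow> 'a) \<Rightarrow> 'a \<Rightarrow> 'a \<Rightarrow> nat" where
  "gdist E tail head x y = (LEAST n. (x, y) \<in> (uadj E tail head) ^^ n)"

text \<open>Tree (connected and acyclic): connected with |E| = |V| - 1.\<close>
definition is_tree :: "'a set \<Rightarrow> 'e set \<Rightarrow> ('e \<Rightarrow> 'a) \<Rightarrow> ('e \<Rightarrow> 'a) \<Rightarrow> bool" where
  "is_tree V E tail head \<longleftrightarrow> digraph V E tail head \<and>
     (\<forall>x\<in>V. \<forall>y\<in>V. (x, y) \<in> (uadj E tail head)\<^sup>*) \<and> card E + 1 = card V"

text \<open>Tree rooted at r with all edges oriented away from r.\<close>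
definition rooted_tree_away :: "'a set \<Rightarrow> 'e set \<Rightarrow> ('e \<Rightarrow> 'a) \<Rightarrow> ('e \<Rightarrow> 'a) \<Rightarrow> 'a \<Rightarrow> bool" where
  "rooted_tree_away V E tail head r \<longleftrightarrow> is_tree V E tail head \<and> r \<in> V \<and>
     (\<forall>k\<in>E. gdist E tail head r (head k) = gdist E tail head r (tail k) + 1)"

definition incid :: "('e \<Rightarrow> 'a) \<Rightarrow> ('e \<Rightarrow> 'a) \<Rightarrow> 'a \<Rightarrow> 'e \<Rightarrow> real" where
  "incid tail head x k = (if x = head k then 1 else if x = tail k then -1 else 0)"

definition subtree :: "'a set \<Rightarrow> 'e set \<Rightarrow> ('e \<Rightarrow> 'a) \<Rightarrow> ('e \<Rightarrow> 'a) \<Rightarrow> 'a \<Rightarrow> 'a set" where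
  "subtree V E tail head x = {y \<in> V. (x, y) \<in> {(tail k, head k) | k. k \<in> E}\<^sup>*}"

definition probvec :: "'b set \<Rightarrow> ('b \<Rightarrow> real) \<Rightarrow> bool" where
  "probvec A \<mu> \<longleftrightarrow> (\<forall>x\<in>A. \<mu> x \<ge> 0) \<and> (\<forall>x. x \<notin> A \<longrightarrow> \<mu> x = 0) \<and> sum \<mu> A = 1"

definition coupling :: "'a set \<Rightarrow> ('a \<Rightarrow> real) \<Rightarrow> ('a \<Rightarrow> real) \<Rightarrow> ('a \<Rightarrow> 'a \<Rightarrow> real) \<Rightarrow> bool" where
  "coupling V \<mu> \<nu> \<pi> \<longleftrightarrow> (\<forall>x\<in>V. \<forall>y\<in>V. \<pi> x y \<ge> 0) \<and>
     (\<forall>x\<in>V. (\<Sum>y\<in>V. \<pi> x y) = \<mu> x) \<and> (\<forall>y\<in>V. (\<Sum>x\<in>V. \<pi> x y) = \<nu> y)"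

definition W1 :: "'a set \<Rightarrow> 'e set \<Rightarrow> ('e \<Rightarrow> 'a) \<Rightarrow> ('e \<Rightarrow> 'a) \<Rightarrow> ('a \<Rightarrow> real) \<Rightarrow> ('a \<Rightarrow> real) \<Rightarrow> real" where
  "W1 V E tail head \<mu> \<nu> = Inf {(\<Sum>x\<in>V. \<Sum>y\<in>V. real (gdist E tail head x y) * \<pi> x y) | \<pi>. coupling V \<mu> \<nu> \<pi>}"

definition abs_cont_on :: "real set \<Rightarrow> (real \<Rightarrow> real) \<Rightarrow> bool" where
  "abs_cont_on S h \<longleftrightarrow> (\<forall>\<epsilon>>0. \<exists>\<delta>>0. \<forall>n (a::nat \<Rightarrow> real) b.
      (\<forall>i<n. a i \<in> S \<and> b i \<in> S \<and> a i \<le> b i) \<and>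
      (\<forall>i<n. \<forall>j<n. i \<noteq> j \<longrightarrow> b i \<le> a j \<or> b j \<le> a i) \<and>
      (\<Sum>i<n. b i - a i) < \<delta> \<longrightarrow> (\<Sum>i<n. \<bar>h (b i) - h (a i)\<bar>) < \<epsilon>)"

definition transport_eq :: "'a set \<Rightarrow> 'e set \<Rightarrow> ('e \<Rightarrow> 'a) \<Rightarrow> ('e \<Rightarrow> 'a) \<Rightarrow>
    (real \<Rightarrow> 'a \<Rightarrow> real) \<Rightarrow> (real \<Rightarrow> 'e \<Rightarrow> real) \<Rightarrow> (real \<Rightarrow> 'e \<Rightarrow> real) \<Rightarrow> bool" where
  "transport_eq V E tail head f v g \<longleftrightarrow>
     (\<forall>t\<in>{0..1}. probvec V (f t)) \<and> (\<forall>x\<in>V. abs_cont_on {0..1} (\<lambda>t. f t x)) \<and>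
     (\<forall>k\<in>E. (\<lambda>t. v t k) \<in> borel_measurable (restrict_space lborel {0..1})) \<and>
     (\<forall>k\<in>E. (\<lambda>t. g t k) \<in> borel_measurable (restrict_space lborel {0..1})) \<and>
     (\<forall>t\<in>{0..1}. probvec E (g t)) \<and>
     (AE t in lborel. t \<in> {0..1} \<longrightarrow> (\<forall>x\<in>V.
        ((\<lambda>\<tau>. f \<tau> x) has_real_derivative (\<Sum>k\<in>E. incid tail head x k * v t k * g t k)) (at t within {0..1})))"

definition action_I :: "'e set \<Rightarrow> real \<Rightarrow> (real \<Rightarrow> 'e \<Rightarrow> real) \<Rightarrow> (real \<Rightarrow> 'e \<Rightarrow> real) \<Rightarrow> real" where
  "action_I E q v g = (integral {0..1} (\<lambda>t. \<Sum>k\<in>E. g t k * \<bar>v t k\<bar> powr q)) powr (1 / q)"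

definition has_W1_speed :: "'a set \<Rightarrow> 'e set \<Rightarrow> ('e \<Rightarrow> 'a) \<Rightarrow> ('e \<Rightarrow> 'a) \<Rightarrow>
    (real \<Rightarrow> 'a \<Rightarrow> real) \<Rightarrow> real \<Rightarrow> real \<Rightarrow> bool" where
  "has_W1_speed V E tail head f t c \<longleftrightarrow>
     ((\<lambda>h. W1 V E tail head (f (t + h)) (f t) / \<bar>h\<bar>) \<longlongrightarrow> c) (at 0 within {h. t + h \<in> {0..1}})"

definition W1_geodesic :: "'a set \<Rightarrow> 'e set \<Rightarrow> ('e \<Rightarrow> 'a) \<Rightarrow> ('e \<Rightarrow> 'a) \<Rightarrow> (real \<Rightarrow> 'a \<Rightarrow> real) \<Rightarrow> bool" where
  "W1_geodesic V E tail head f \<longleftrightarrow> (\<forall>s\<in>{0..1}. \<forall>t\<in>{0..1}.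
     W1 V E tail head (f s) (f t) = \<bar>s - t\<bar> * W1 V E tail head (f 0) (f 1))"

end

theory Submission
  imports Defs
begin

(* On a tree, W1 has a closed form: W1(mu, nu) is the sum over the edges k of
   |mu(U(head k)) - nu(U(head k))|.  It is a lower bound for the cost of every coupling, because
   a step along an edge of the underlying graph enters or leaves exactly one of the subtrees
   U(head k); a coupling attaining it is built by induction, pruning a leaf and handing its
   surplus mass to its parent.

   Applied to f(t+h) and f(t), the closed form turns the metric speed into the sum of
   |d/dt F(t)_(head k)| over the edges, which is s(t) because F(t)_r = 1 for all t.  Along a
   constant speed geodesic the speed is therefore W1(f 0, f 1), which is positive since the
   subtree masses determine a measure.  Finally U(x) is x together with the subtrees of the
   children of x, so d/dt f(t)_x is the flux d/dt F(t)_x entering x minus the fluxes leaving it: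
   routing the flux of edge k at constant speed s(t) solves the transport equation, and its
   action is s(t) = W1(f 0, f 1) for every exponent q. *)

definition subtree_mass :: "'a set \<Rightarrow> 'e set \<Rightarrow> ('e \<Rightarrow> 'a) \<Rightarrow> ('e \<Rightarrow> 'a) \<Rightarrow> ('a \<Rightarrow> real) \<Rightarrow> 'a \<Rightarrow> real" where
  "subtree_mass V E tail head \<mu> x = (\<Sum>y\<in>subtree V E tail head x. \<mu> y)"

definition tree_W1 :: "'a set \<Rightarrow> 'e set \<Rightarrow> ('e \<Rightarrow> 'a) \<Rightarrow> ('e \<Rightarrow> 'a) \<Rightarrow> ('a \<Rightarrow> real) \<Rightarrow> ('a \<Rightarrow> real) \<Rightarrow> real" where
  "tree_W1 V E tail head \<mu> \<nu> =
     (\<Sum>k\<in>E. \<bar>subtree_mass V E tail head \<mu> (head k) - subtree_mass V E tail head \<nu> (head k)\<bar>)"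

definition coupling_cost :: "'a set \<Rightarrow> ('a \<Rightarrow> 'a \<Rightarrow> real) \<Rightarrow> ('a \<Rightarrow> 'a \<Rightarrow> real) \<Rightarrow> real" where
  "coupling_cost V d \<pi> = (\<Sum>x\<in>V. \<Sum>y\<in>V. d x y * \<pi> x y)"

text \<open>The upper bound for W1 is proved by deleting leaves one at a time while keeping the graph
  distance of the original tree, hence this class of costs.\<close>
definition unit_edge_quasimetric :: "'a set \<Rightarrow> 'e set \<Rightarrow> ('e \<Rightarrow> 'a) \<Rightarrow> ('e \<Rightarrow> 'a) \<Rightarrow> ('a \<Rightarrow> 'a \<Rightarrow> real) \<Rightarrow> bool" where
  "unit_edge_quasimetric V E tail head d \<longleftrightarrow> (\<forall>x\<in>V. d x x = 0) \<and>
     (\<forall>x\<in>V. \<forall>y\<in>V. \<forall>z\<in>V. d x z \<le> d x y + d y z) \<and>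
     (\<forall>k\<in>E. d (tail k) (head k) \<le> 1 \<and> d (head k) (tail k) \<le> 1)"

lemma sum_fun_upd_add:
  fixes \<mu> :: "'a \<Rightarrow> 'b::comm_monoid_add"
  assumes "finite S"
  shows "(\<Sum>y\<in>S. (\<mu>(p := \<mu> p + c)) y) = (\<Sum>y\<in>S. \<mu> y) + (if p \<in> S then c else 0)"
proof -
  have "(\<Sum>y\<in>S. (\<mu>(p := \<mu> p + c)) y) = (\<Sum>y\<in>S. \<mu> y + (if y = p then c else 0))"
    by (rule sum.cong) auto
  then show ?thesis using assms by (simp add: sum.distrib)
qed

lemma coupling_transpose: "coupling V \<mu> \<nu> \<pi> \<Longrightarrow> coupling V \<nu> \<mu> (\<lambda>x y. \<pi> y x)"
  by (auto simp: coupling_def)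

lemma coupling_cost_transpose: "coupling_cost V (\<lambda>x y. d y x) (\<lambda>x y. \<pi> y x) = coupling_cost V d \<pi>"
  unfolding coupling_cost_def by (rule sum.swap)

lemma unit_edge_quasimetric_transpose:
  "unit_edge_quasimetric V E tail head d \<Longrightarrow> unit_edge_quasimetric V E tail head (\<lambda>x y. d y x)"
  unfolding unit_edge_quasimetric_def by (metis add.commute)

lemma unit_edge_quasimetric_subset:
  "unit_edge_quasimetric V E tail head d \<Longrightarrow> V' \<subseteq> V \<Longrightarrow> E' \<subseteq> E \<Longrightarrow> unit_edge_quasimetric V' E' tail head d"
  unfolding unit_edge_quasimetric_def by blast

lemma tree_W1_commute: "tree_W1 V E tail head \<mu> \<nu> = tree_W1 V E tail head \<nu> \<mu>"
  by (simp add: tree_W1_def abs_minus_commute)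

section \<open>Gluing a leaf onto a coupling\<close>

text \<open>The new leaf l keeps the mass m in place and takes over the fraction \<theta> of the plan
  of its parent p.\<close>
definition leaf_coupling :: "('a \<Rightarrow> 'a \<Rightarrow> real) \<Rightarrow> 'a \<Rightarrow> 'a \<Rightarrow> real \<Rightarrow> real \<Rightarrow> 'a \<Rightarrow> 'a \<Rightarrow> real" where
  "leaf_coupling \<pi> p l m \<theta> x y =
     (if y = l then (if x = l then m else 0)
      else if x = l then \<theta> * \<pi> p y else if x = p then (1 - \<theta>) * \<pi> p y else \<pi> x y)"

lemma coupling_leaf_coupling:
  assumes V: "finite V" "p \<in> V" "l \<notin> V" and cp: "coupling V \<mu>' \<nu> \<pi>"
    and \<theta>: "0 \<le> \<theta>" "\<theta> \<le> 1" and m: "0 \<le> m"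
    and \<mu>: "\<mu> l = m + \<theta> * \<mu>' p" "\<mu> p = (1 - \<theta>) * \<mu>' p" "\<And>x. x \<in> V \<Longrightarrow> x \<noteq> p \<Longrightarrow> \<mu> x = \<mu>' x"
    and \<nu>: "\<nu> l = m"
  shows "coupling (insert l V) \<mu> \<nu> (leaf_coupling \<pi> p l m \<theta>)"
proof -
  have nonneg: "\<And>x y. x \<in> V \<Longrightarrow> y \<in> V \<Longrightarrow> 0 \<le> \<pi> x y"
    and rows: "\<And>x. x \<in> V \<Longrightarrow> (\<Sum>y\<in>V. \<pi> x y) = \<mu>' x"
    and cols: "\<And>y. y \<in> V \<Longrightarrow> (\<Sum>x\<in>V. \<pi> x y) = \<nu> y"
    using cp by (auto simp: coupling_def)
  have row: "(\<Sum>y\<in>V. leaf_coupling \<pi> p l m \<theta> x y) =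
      (if x = l then \<theta> * \<mu>' p else if x = p then (1 - \<theta>) * \<mu>' p else \<mu>' x)" if "x \<in> insert l V" for x
  proof -
    have "(\<Sum>y\<in>V. leaf_coupling \<pi> p l m \<theta> x y) =
        (\<Sum>y\<in>V. if x = l then \<theta> * \<pi> p y else if x = p then (1 - \<theta>) * \<pi> p y else \<pi> x y)"
      using V by (intro sum.cong) (auto simp: leaf_coupling_def)
    then show ?thesis using that rows V by (auto simp flip: sum_distrib_left)
  qed
  have col: "(\<Sum>x\<in>V. leaf_coupling \<pi> p l m \<theta> x y) = (if y = l then 0 else \<nu> y - \<theta> * \<pi> p y)"
    if "y \<in> insert l V" for y
  proof -
    have "(\<Sum>x\<in>V. leaf_coupling \<pi> p l m \<theta> x y) =
        (\<Sum>x\<in>V. if y = l then 0 else \<pi> x y - (if x = p then \<theta> * \<pi> p y else 0))"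
      using V by (intro sum.cong) (auto simp: leaf_coupling_def algebra_simps)
    then show ?thesis using that cols V by (auto simp: sum_subtractf)
  qed
  show ?thesis
    unfolding coupling_def
  proof (intro conjI ballI)
    fix x y assume "x \<in> insert l V" "y \<in> insert l V"
    then show "0 \<le> leaf_coupling \<pi> p l m \<theta> x y"
      using nonneg V \<theta> m by (auto simp: leaf_coupling_def)
  next
    fix x assume "x \<in> insert l V"
    then show "(\<Sum>y\<in>insert l V. leaf_coupling \<pi> p l m \<theta> x y) = \<mu> x"
      using row V \<mu> \<nu> by (auto simp: leaf_coupling_def)
  next
    fix y assume "y \<in> insert l V"
    then show "(\<Sum>x\<in>insert l V. leaf_coupling \<pi> p l m \<theta> x y) = \<nu> y"
      using col V \<nu> by (auto simp: leaf_coupling_def[of _ _ _ _ _ l])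
  qed
qed

lemma coupling_cost_leaf_coupling:
  assumes "finite V" "p \<in> V" "l \<notin> V" "0 \<le> \<theta>" "d l l = 0"
    and nonneg: "\<And>y. y \<in> V \<Longrightarrow> 0 \<le> \<pi> p y" and short: "\<And>y. y \<in> V \<Longrightarrow> d l y \<le> d p y + 1"
  shows "coupling_cost (insert l V) d (leaf_coupling \<pi> p l m \<theta>) \<le> coupling_cost V d \<pi> + \<theta> * (\<Sum>y\<in>V. \<pi> p y)"
proof -
  let ?\<pi> = "leaf_coupling \<pi> p l m \<theta>"
  have "(\<Sum>y\<in>insert l V. d l y * ?\<pi> l y) = \<theta> * (\<Sum>y\<in>V. d l y * \<pi> p y)"
    using assms(1,3,5) by (auto simp: leaf_coupling_def sum_distrib_left algebra_simps intro!: sum.cong)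
  moreover have "(\<Sum>y\<in>insert l V. d x y * ?\<pi> x y) =
      (\<Sum>y\<in>V. d x y * \<pi> x y) - (if x = p then \<theta> * (\<Sum>y\<in>V. d p y * \<pi> p y) else 0)" if "x \<in> V" for x
  proof -
    have "(\<Sum>y\<in>insert l V. d x y * ?\<pi> x y) =
        (\<Sum>y\<in>V. d x y * \<pi> x y - (if x = p then \<theta> * (d p y * \<pi> p y) else 0))"
      using assms(1,3) that by (auto simp: leaf_coupling_def algebra_simps intro!: sum.cong)
    then show ?thesis by (cases "x = p") (simp_all add: sum_subtractf sum_distrib_left)
  qed
  then have "(\<Sum>x\<in>V. \<Sum>y\<in>insert l V. d x y * ?\<pi> x y) = coupling_cost V d \<pi> - \<theta> * (\<Sum>y\<in>V. d p y * \<pi> p y)"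
    using assms(1,2) by (simp add: coupling_cost_def sum_subtractf)
  ultimately have "coupling_cost (insert l V) d ?\<pi> =
      coupling_cost V d \<pi> + \<theta> * (\<Sum>y\<in>V. (d l y - d p y) * \<pi> p y)"
    using assms(1,3) by (simp add: coupling_cost_def algebra_simps sum_subtractf)
  also have "\<dots> \<le> coupling_cost V d \<pi> + \<theta> * (\<Sum>y\<in>V. \<pi> p y)"
  proof (intro add_left_mono mult_left_mono sum_mono)
    fix y assume "y \<in> V"
    have "(d l y - d p y) * \<pi> p y \<le> 1 * \<pi> p y"
      by (rule mult_right_mono) (use short[OF \<open>y \<in> V\<close>] nonneg[OF \<open>y \<in> V\<close>] in auto)
    then show "(d l y - d p y) * \<pi> p y \<le> \<pi> p y" by simp
  qed (rule assms(4))
  finally show ?thesis .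
qed

section \<open>Rooted trees\<close>

locale arborescence =
  fixes V :: "'a set" and E :: "'e set" and tail head :: "'e \<Rightarrow> 'a" and r :: 'a
    and depth :: "'a \<Rightarrow> nat"
  assumes finite_V: "finite V" and finite_E: "finite E" and root_in_V: "r \<in> V"
    and tail_in_V: "k \<in> E \<Longrightarrow> tail k \<in> V" and head_in_V: "k \<in> E \<Longrightarrow> head k \<in> V"
    and inj_head: "inj_on head E" and head_image: "head ` E = V - {r}"
    and depth_head: "k \<in> E \<Longrightarrow> depth (head k) = depth (tail k) + 1"
begin

abbreviation arcs :: "('a \<times> 'a) set" where
  "arcs \<equiv> {(tail k, head k) | k. k \<in> E}"

abbreviation U :: "'a \<Rightarrow> 'a set" where
  "U \<equiv> subtree V E tail head"

abbreviation mass :: "('a \<Rightarrow> real) \<Rightarrow> 'a \<Rightarrow> real" where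
  "mass \<equiv> subtree_mass V E tail head"

lemma head_eq_iff: "k1 \<in> E \<Longrightarrow> k2 \<in> E \<Longrightarrow> head k1 = head k2 \<longleftrightarrow> k1 = k2"
  using inj_head by (auto simp: inj_on_def)

lemma mem_subtree: "y \<in> U x \<longleftrightarrow> y \<in> V \<and> (x, y) \<in> arcs\<^sup>*"
  by (simp add: subtree_def)

lemma subtree_subset: "U x \<subseteq> V"
  by (auto simp: mem_subtree)

lemma finite_subtree: "finite (U x)"
  using subtree_subset finite_V finite_subset by blast

lemma depth_mono: "(x, y) \<in> arcs\<^sup>* \<Longrightarrow> depth x \<le> depth y"
  by (induction rule: rtrancl_induct) (auto simp: depth_head)

lemma depth_strict_mono: "(x, y) \<in> arcs\<^sup>* \<Longrightarrow> x \<noteq> y \<Longrightarrow> depth x < depth y"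
  by (induction rule: rtrancl_induct) (auto dest!: depth_mono simp: depth_head)

text \<open>Each vertex has at most one incoming arc, so ancestors of a common descendant are nested.\<close>
lemma common_descendant_imp_comparable:
  "(a, y) \<in> arcs\<^sup>* \<Longrightarrow> (b, y) \<in> arcs\<^sup>* \<Longrightarrow> (a, b) \<in> arcs\<^sup>* \<or> (b, a) \<in> arcs\<^sup>*"
proof (induction arbitrary: b rule: rtrancl_induct)
  case base
  then show ?case by simp
next
  case (step z y)
  from step(4) show ?case
  proof (cases rule: rtranclE)
    case base
    then show ?thesis using rtrancl_into_rtrancl[OF step(1,2)] by simp
  next
    case (step w)
    with \<open>(z, y) \<in> arcs\<close> have "w = z" by (auto simp: head_eq_iff)
    then show ?thesis using step.IH step(1) by auto
  qed
qed

lemma reachable_from_root: "y \<in> V \<Longrightarrow> (r, y) \<in> arcs\<^sup>*"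
proof (induction "depth y" arbitrary: y rule: less_induct)
  case less
  show ?case
  proof (cases "y = r")
    case False
    then obtain k where k: "k \<in> E" "y = head k" using head_image less.prems by auto
    then have "(r, tail k) \<in> arcs\<^sup>*" using less.hyps[of "tail k"] depth_head tail_in_V by auto
    moreover have "(tail k, y) \<in> arcs" using k by auto
    ultimately show ?thesis by (rule rtrancl_into_rtrancl)
  qed simp
qed

lemma subtree_root: "U r = V"
  using reachable_from_root by (auto simp: mem_subtree)

lemma uadj_connected:
  assumes "x \<in> V" "y \<in> V"
  shows "(x, y) \<in> (uadj E tail head)\<^sup>*"
proof -
  have arcs_uadj: "arcs \<subseteq> uadj E tail head" and arcs_conv: "arcs\<inverse> \<subseteq> uadj E tail head"
    by (auto simp: uadj_def)
  have "(x, r) \<in> (uadj E tail head)\<^sup>*"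
    using rtrancl_mono[OF arcs_conv] reachable_from_root[OF assms(1)] by (auto simp: rtrancl_converse)
  moreover have "(r, y) \<in> (uadj E tail head)\<^sup>*"
    using rtrancl_mono[OF arcs_uadj] reachable_from_root[OF assms(2)] by auto
  ultimately show ?thesis by (rule rtrancl_trans)
qed

lemma tail_notin_subtree_head: "k \<in> E \<Longrightarrow> tail k \<notin> U (head k)"
  using depth_mono depth_head by (fastforce simp: mem_subtree)

lemma subtrees_of_siblings_disjoint:
  assumes "k1 \<in> E" "k2 \<in> E" "tail k1 = tail k2" "k1 \<noteq> k2"
  shows "U (head k1) \<inter> U (head k2) = {}"
proof (rule ccontr)
  assume "U (head k1) \<inter> U (head k2) \<noteq> {}"
  then obtain y where "(head k1, y) \<in> arcs\<^sup>*" "(head k2, y) \<in> arcs\<^sup>*" by (auto simp: mem_subtree)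
  then have "(head k1, head k2) \<in> arcs\<^sup>* \<or> (head k2, head k1) \<in> arcs\<^sup>*"
    by (rule common_descendant_imp_comparable)
  moreover have "depth (head k1) = depth (head k2)" using assms depth_head by simp
  ultimately have "head k1 = head k2" using depth_strict_mono by fastforce
  then show False using assms head_eq_iff by auto
qed

lemma subtree_unfold:
  assumes "x \<in> V"
  shows "U x = insert x (\<Union>k\<in>{k\<in>E. tail k = x}. U (head k))"
proof (intro equalityI subsetI)
  fix y assume "y \<in> U x"
  then have "y \<in> V" "(x, y) \<in> arcs\<^sup>*" by (auto simp: mem_subtree)
  from this(2) show "y \<in> insert x (\<Union>k\<in>{k\<in>E. tail k = x}. U (head k))"
    by (cases rule: converse_rtranclE) (use \<open>y \<in> V\<close> in \<open>auto simp: mem_subtree\<close>)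
next
  fix y assume "y \<in> insert x (\<Union>k\<in>{k\<in>E. tail k = x}. U (head k))"
  then show "y \<in> U x"
    using assms by (auto simp: mem_subtree intro: converse_rtrancl_into_rtrancl)
qed

lemma subtree_mass_unfold:
  assumes "x \<in> V"
  shows "mass \<mu> x = \<mu> x + (\<Sum>k\<in>{k\<in>E. tail k = x}. mass \<mu> (head k))"
proof -
  let ?C = "{k\<in>E. tail k = x}"
  have "(\<Sum>y\<in>(\<Union>k\<in>?C. U (head k)). \<mu> y) = (\<Sum>k\<in>?C. mass \<mu> (head k))"
    unfolding subtree_mass_def
    by (rule sum.UNION_disjoint) (auto simp: finite_E finite_subtree dest: subtrees_of_siblings_disjoint)
  moreover have "x \<notin> (\<Union>k\<in>?C. U (head k))" using tail_notin_subtree_head by auto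
  moreover have "finite (\<Union>k\<in>?C. U (head k))" using finite_E finite_subtree by auto
  ultimately show ?thesis using subtree_unfold[OF assms] by (simp add: subtree_mass_def)
qed

lemma subtree_tail_iff_head:
  assumes "k0 \<in> E" "k \<in> E" "k \<noteq> k0"
  shows "tail k0 \<in> U (head k) \<longleftrightarrow> head k0 \<in> U (head k)"
proof
  assume "head k0 \<in> U (head k)"
  then have "(head k, head k0) \<in> arcs\<^sup>*" "head k \<noteq> head k0"
    using assms head_eq_iff by (auto simp: mem_subtree)
  then show "tail k0 \<in> U (head k)"
    by (cases rule: rtranclE) (use assms tail_in_V in \<open>auto simp: mem_subtree head_eq_iff\<close>)
next
  assume "tail k0 \<in> U (head k)"
  then show "head k0 \<in> U (head k)"
    using assms head_in_V by (auto simp: mem_subtree intro: rtrancl_into_rtrancl)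
qed

lemma exists_leaf_edge:
  assumes "E \<noteq> {}"
  obtains k0 where "k0 \<in> E" "\<And>k. k \<in> E \<Longrightarrow> tail k \<noteq> head k0"
proof -
  let ?D = "(\<lambda>k. depth (head k)) ` E"
  have "Max ?D \<in> ?D" using finite_E assms by simp
  then obtain k0 where k0: "k0 \<in> E" "depth (head k0) = Max ?D" by auto
  have "tail k \<noteq> head k0" if "k \<in> E" for k
  proof -
    have "depth (head k) \<le> depth (head k0)" using Max_ge[of ?D] finite_E that k0 by simp
    then show ?thesis using depth_head[OF that] by auto
  qed
  with k0 that show ?thesis by blast
qed

lemma subtree_mass_root: "mass \<mu> r = sum \<mu> V"
  by (simp add: subtree_mass_def subtree_root)

lemma sum_vertices_eq_root_plus_heads: "(\<Sum>x\<in>V. \<phi> x) = \<phi> r + (\<Sum>k\<in>E. \<phi> (head k))"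
proof -
  have "(\<Sum>x\<in>V. \<phi> x) = \<phi> r + (\<Sum>x\<in>V - {r}. \<phi> x)" by (rule sum.remove[OF finite_V root_in_V])
  also have "(\<Sum>x\<in>V - {r}. \<phi> x) = (\<Sum>k\<in>E. \<phi> (head k))"
    unfolding head_image[symmetric] by (rule sum.reindex_cong[OF inj_head refl refl])
  finally show ?thesis .
qed

lemma subtree_masses_eq_imp_eq:
  assumes "\<And>y. y \<in> V \<Longrightarrow> mass \<mu> y = mass \<nu> y" "x \<in> V"
  shows "\<mu> x = \<nu> x"
proof -
  have "(\<Sum>k\<in>{k\<in>E. tail k = x}. mass \<mu> (head k)) = (\<Sum>k\<in>{k\<in>E. tail k = x}. mass \<nu> (head k))"
    using assms(1) head_in_V by (intro sum.cong) auto
  then show ?thesis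
    using subtree_mass_unfold[OF assms(2), of \<mu>] subtree_mass_unfold[OF assms(2), of \<nu>] assms by simp
qed

text \<open>The mass balance at a vertex: what enters x through its incoming edge is what x keeps
  plus what leaves through its outgoing edges.\<close>
lemma incidence_subtree_mass:
  assumes "x \<in> V" "sum \<phi> V = 0"
  shows "\<phi> x = (\<Sum>k\<in>E. incid tail head x k * mass \<phi> (head k))"
proof -
  have "(\<Sum>k\<in>E. incid tail head x k * mass \<phi> (head k)) =
      (\<Sum>k\<in>E. if head k = x then mass \<phi> (head k) else 0) - (\<Sum>k\<in>E. if tail k = x then mass \<phi> (head k) else 0)"
    unfolding sum_subtractf[symmetric] using depth_head
    by (intro sum.cong) (fastforce simp: incid_def)+
  also have "(\<Sum>k\<in>E. if head k = x then mass \<phi> (head k) else 0) = mass \<phi> x"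
  proof -
    have "(\<Sum>k\<in>E. if head k = x then mass \<phi> (head k) else 0) = (\<Sum>y\<in>head ` E. if y = x then mass \<phi> y else 0)"
      by (simp add: sum.reindex[OF inj_head])
    also have "\<dots> = mass \<phi> x"
      using finite_V head_image assms by (cases "x = r") (simp_all add: subtree_mass_root)
    finally show ?thesis .
  qed
  also have "(\<Sum>k\<in>E. if tail k = x then mass \<phi> (head k) else 0) = mass \<phi> x - \<phi> x"
    using subtree_mass_unfold[OF assms(1)] finite_E by (simp add: sum.inter_filter)
  finally show ?thesis by simp
qed

context
  fixes k0 assumes k0_in_E: "k0 \<in> E" and leaf: "\<And>k. k \<in> E \<Longrightarrow> tail k \<noteq> head k0"
begin

lemma subtree_leaf: "U (head k0) = {head k0}"
proof -
  have "y = head k0" if "(head k0, y) \<in> arcs\<^sup>*" for y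
    using that by (cases rule: converse_rtranclE) (auto dest: leaf)
  then show ?thesis using head_in_V[OF k0_in_E] by (auto simp: mem_subtree)
qed

lemma arborescence_remove_leaf: "arborescence (V - {head k0}) (E - {k0}) tail head r depth"
proof
  have "head k0 \<noteq> r" using head_image k0_in_E by auto
  then show "r \<in> V - {head k0}" using root_in_V by simp
  show "tail k \<in> V - {head k0}" "head k \<in> V - {head k0}" if "k \<in> E - {k0}" for k
    using that tail_in_V head_in_V leaf head_eq_iff[OF _ k0_in_E] by auto
  have "head ` (E - {k0}) = head ` E - {head k0}"
    using head_eq_iff[OF _ k0_in_E] k0_in_E by auto
  then show "head ` (E - {k0}) = V - {head k0} - {r}"
    using head_image by auto
qed (use finite_V finite_E inj_head depth_head in \<open>auto intro: inj_on_subset\<close>)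

lemma subtree_remove_leaf: "subtree (V - {head k0}) (E - {k0}) tail head x = U x - {head k0}"
proof -
  let ?arcs' = "{(tail k, head k) | k. k \<in> E - {k0}}"
  have "(x, y) \<in> ?arcs'\<^sup>*" if "(x, y) \<in> arcs\<^sup>*" "y \<noteq> head k0" for y
    using that
  proof (induction rule: rtrancl_induct)
    case (step z y)
    then obtain k where k: "k \<in> E" "z = tail k" "y = head k" by auto
    then have "(z, y) \<in> ?arcs'" "z \<noteq> head k0" using step.prems leaf by auto
    with step.IH show ?case by (auto intro: rtrancl_into_rtrancl)
  qed simp
  moreover have "?arcs' \<subseteq> arcs" by auto
  ultimately show ?thesis unfolding subtree_def using rtrancl_mono by blast
qed

lemma subtree_mass_remove_leaf:
  assumes "k \<in> E" "k \<noteq> k0"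
  shows "subtree_mass (V - {head k0}) (E - {k0}) tail head (\<mu>(tail k0 := \<mu> (tail k0) + c)) (head k)
    = mass \<mu> (head k) + (if head k0 \<in> U (head k) then c - \<mu> (head k0) else 0)"
proof -
  let ?S = "U (head k) - {head k0}"
  have "finite ?S" using finite_subtree by simp
  have tail_iff: "tail k0 \<in> ?S \<longleftrightarrow> head k0 \<in> U (head k)"
    using subtree_tail_iff_head[OF k0_in_E assms] leaf[OF k0_in_E] by auto
  have "(\<Sum>y\<in>?S. (\<mu>(tail k0 := \<mu> (tail k0) + c)) y) = (\<Sum>y\<in>?S. \<mu> y) + (if tail k0 \<in> ?S then c else 0)"
    using \<open>finite ?S\<close> by (rule sum_fun_upd_add)
  also have "(\<Sum>y\<in>?S. \<mu> y) = mass \<mu> (head k) - (if head k0 \<in> U (head k) then \<mu> (head k0) else 0)"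
    using finite_subtree by (simp add: subtree_mass_def sum_diff1)
  finally have "(\<Sum>y\<in>?S. (\<mu>(tail k0 := \<mu> (tail k0) + c)) y)
      = mass \<mu> (head k) + (if head k0 \<in> U (head k) then c - \<mu> (head k0) else 0)"
    using tail_iff by simp
  then show ?thesis by (simp add: subtree_mass_def[of "V - {head k0}"] subtree_remove_leaf)
qed

lemma tree_W1_remove_leaf:
  "tree_W1 V E tail head \<mu> \<nu> = \<bar>\<mu> (head k0) - \<nu> (head k0)\<bar> +
     tree_W1 (V - {head k0}) (E - {k0}) tail head (\<mu>(tail k0 := \<mu> (tail k0) + (\<mu> (head k0) - \<nu> (head k0)))) \<nu>"
proof -
  have "tree_W1 V E tail head \<mu> \<nu> = \<bar>mass \<mu> (head k0) - mass \<nu> (head k0)\<bar> +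
      (\<Sum>k\<in>E - {k0}. \<bar>mass \<mu> (head k) - mass \<nu> (head k)\<bar>)"
    unfolding tree_W1_def by (rule sum.remove[OF finite_E k0_in_E])
  moreover have "mass \<mu> (head k0) - mass \<nu> (head k0) = \<mu> (head k0) - \<nu> (head k0)"
    by (simp add: subtree_mass_def subtree_leaf)
  moreover have "\<bar>mass \<mu> (head k) - mass \<nu> (head k)\<bar> = \<bar>subtree_mass (V - {head k0}) (E - {k0}) tail head
      (\<mu>(tail k0 := \<mu> (tail k0) + (\<mu> (head k0) - \<nu> (head k0)))) (head k)
      - subtree_mass (V - {head k0}) (E - {k0}) tail head \<nu> (head k)\<bar>" if "k \<in> E - {k0}" for k
    using subtree_mass_remove_leaf[of k \<nu> 0] subtree_mass_remove_leaf[of k \<mu>] that by simp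
  ultimately show ?thesis
    unfolding tree_W1_def by simp
qed

lemma exists_coupling_extend_leaf:
  fixes \<mu> \<nu> :: "'a \<Rightarrow> real"
  defines "\<mu>' \<equiv> \<mu>(tail k0 := \<mu> (tail k0) + (\<mu> (head k0) - \<nu> (head k0)))"
  assumes d: "unit_edge_quasimetric V E tail head d"
    and \<mu>_nonneg: "\<And>x. x \<in> V \<Longrightarrow> 0 \<le> \<mu> x" and \<nu>_nonneg: "\<And>x. x \<in> V \<Longrightarrow> 0 \<le> \<nu> x"
    and le: "\<nu> (head k0) \<le> \<mu> (head k0)"
    and cp: "coupling (V - {head k0}) \<mu>' \<nu> \<pi>"
    and cost: "coupling_cost (V - {head k0}) d \<pi> \<le> tree_W1 (V - {head k0}) (E - {k0}) tail head \<mu>' \<nu>"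
  shows "\<exists>\<pi>. coupling V \<mu> \<nu> \<pi> \<and> coupling_cost V d \<pi> \<le> tree_W1 V E tail head \<mu> \<nu>"
proof -
  define l where "l = head k0"
  define p where "p = tail k0"
  define a where "a = \<mu> l - \<nu> l"
  \<comment> \<open>If \<mu>' p = 0 then a = 0, and division by zero gives the right value \<theta> = 0.\<close>
  define \<theta> where "\<theta> = a / \<mu>' p"
  have p: "p \<in> V - {l}" and l: "l \<in> V"
    using head_in_V tail_in_V k0_in_E leaf by (auto simp: l_def p_def)
  have a: "0 \<le> a" "\<mu>' p = \<mu> p + a" "\<mu> p \<ge> 0"
    using le \<mu>_nonneg p by (auto simp: a_def \<mu>'_def l_def p_def)
  have \<theta>_a: "\<theta> * \<mu>' p = a" and \<theta>: "0 \<le> \<theta>" "\<theta> \<le> 1"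
    using a by (cases "\<mu>' p = 0"; simp add: \<theta>_def)+
  have row_p: "(\<Sum>y\<in>V - {l}. \<pi> p y) = \<mu>' p" and \<pi>_nonneg: "\<And>y. y \<in> V - {l} \<Longrightarrow> 0 \<le> \<pi> p y"
    using cp p by (auto simp: coupling_def l_def)
  let ?\<pi> = "leaf_coupling \<pi> p l (\<nu> l) \<theta>"
  have cpl: "coupling (insert l (V - {l})) \<mu> \<nu> ?\<pi>"
    by (rule coupling_leaf_coupling[OF _ p _ cp[folded l_def] \<theta>])
      (use finite_V \<nu>_nonneg l \<theta>_a a in \<open>auto simp: \<mu>'_def a_def p_def algebra_simps\<close>)
  have short: "d l y \<le> d p y + 1" if "y \<in> V - {l}" for y
    using d that p l k0_in_E unfolding unit_edge_quasimetric_def l_def p_def by force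
  have "d l l = 0" using d l by (simp add: unit_edge_quasimetric_def)
  then have "coupling_cost (insert l (V - {l})) d ?\<pi> \<le> coupling_cost (V - {l}) d \<pi> + \<theta> * (\<Sum>y\<in>V - {l}. \<pi> p y)"
    by (intro coupling_cost_leaf_coupling p \<theta>(1) \<pi>_nonneg short) (use finite_V in auto)
  also have "\<dots> = coupling_cost (V - {l}) d \<pi> + a" using row_p \<theta>_a by simp
  also have "\<dots> \<le> tree_W1 V E tail head \<mu> \<nu>"
    using cost tree_W1_remove_leaf[of \<mu> \<nu>] a
    by (simp add: \<mu>'_def a_def l_def p_def)
  finally show ?thesis using cpl unfolding insert_Diff[OF l] by blast
qed

end

end

section \<open>Graph distance\<close>

lemma gdist_le: "(x, y) \<in> (uadj E tail head) ^^ n \<Longrightarrow> gdist E tail head x y \<le> n"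
  unfolding gdist_def by (rule Least_le)

lemma gdist_relpow:
  assumes "(x, y) \<in> (uadj E tail head)\<^sup>*"
  shows "(x, y) \<in> (uadj E tail head) ^^ gdist E tail head x y"
proof -
  obtain n where "(x, y) \<in> (uadj E tail head) ^^ n" using assms rtrancl_power by blast
  then show ?thesis unfolding gdist_def by (rule LeastI)
qed

lemma gdist_refl: "gdist E tail head x x = 0"
  unfolding gdist_def by (rule Least_eq_0) simp

lemma rooted_tree_away_head_image:
  assumes rt: "rooted_tree_away V E tail head r"
  shows "head ` E = V - {r}"
proof -
  have "digraph V E tail head" and r: "r \<in> V"
    and depth: "\<And>k. k \<in> E \<Longrightarrow> gdist E tail head r (head k) = gdist E tail head r (tail k) + 1"
    using rt by (auto simp: rooted_tree_away_def is_tree_def)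
  then have ends: "\<And>k. k \<in> E \<Longrightarrow> tail k \<in> V \<and> head k \<in> V" by (auto simp: digraph_def)
  have "head k \<noteq> r" if "k \<in> E" for k
    using depth[OF that] gdist_refl[of E tail head r] by auto
  moreover have "x \<in> head ` E" if x: "x \<in> V" "x \<noteq> r" for x
  proof -
    have "(r, x) \<in> (uadj E tail head)\<^sup>*" using rt r x by (simp add: rooted_tree_away_def is_tree_def)
    from gdist_relpow[OF this] have path: "(r, x) \<in> (uadj E tail head) ^^ gdist E tail head r x" .
    then obtain m where m: "gdist E tail head r x = Suc m" using x by (cases "gdist E tail head r x") auto
    then obtain z where z: "(r, z) \<in> (uadj E tail head) ^^ m" "(z, x) \<in> uadj E tail head"
      using path by auto
    from z(2) obtain k where k: "k \<in> E" "(z, x) = (tail k, head k) \<or> (z, x) = (head k, tail k)"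
      by (auto simp: uadj_def)
    have "(z, x) \<noteq> (head k, tail k)"
      using gdist_le[OF z(1)] depth[OF k(1)] m by auto
    then show ?thesis using k by auto
  qed
  ultimately show ?thesis using ends by auto
qed

lemma rooted_tree_away_imp_arborescence:
  assumes rt: "rooted_tree_away V E tail head r"
  shows "arborescence V E tail head r (gdist E tail head r)"
proof
  have dg: "digraph V E tail head" and card: "card E + 1 = card V"
    using rt by (auto simp: rooted_tree_away_def is_tree_def)
  then show "finite V" "finite E" "\<And>k. k \<in> E \<Longrightarrow> tail k \<in> V" "\<And>k. k \<in> E \<Longrightarrow> head k \<in> V"
    by (auto simp: digraph_def)
  show "r \<in> V" using rt by (simp add: rooted_tree_away_def)
  show heads: "head ` E = V - {r}" by (rule rooted_tree_away_head_image[OF rt])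
  have "card (head ` E) = card E" using heads card \<open>finite V\<close> \<open>r \<in> V\<close> by simp
  then show "inj_on head E" using \<open>finite E\<close> by (simp add: inj_on_iff_eq_card)
  show "\<And>k. k \<in> E \<Longrightarrow> gdist E tail head r (head k) = gdist E tail head r (tail k) + 1"
    using rt by (simp add: rooted_tree_away_def)
qed

section \<open>The Wasserstein distance on a tree\<close>

lemma exists_coupling_transpose:
  assumes "\<exists>\<pi>. coupling V \<nu> \<mu> \<pi> \<and> coupling_cost V (\<lambda>x y. d y x) \<pi> \<le> tree_W1 V E tail head \<nu> \<mu>"
  shows "\<exists>\<pi>. coupling V \<mu> \<nu> \<pi> \<and> coupling_cost V d \<pi> \<le> tree_W1 V E tail head \<mu> \<nu>"
proof -
  from assms obtain \<pi> where cp: "coupling V \<nu> \<mu> \<pi>"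
    and cost: "coupling_cost V (\<lambda>x y. d y x) \<pi> \<le> tree_W1 V E tail head \<nu> \<mu>"
    by blast
  have "coupling_cost V d (\<lambda>x y. \<pi> y x) \<le> tree_W1 V E tail head \<mu> \<nu>"
    using cost coupling_cost_transpose[of V "\<lambda>x y. d y x" \<pi>] tree_W1_commute[of V E tail head \<mu> \<nu>] by simp
  with coupling_transpose[OF cp] show ?thesis by blast
qed

lemma exists_coupling_cost_le_tree_W1:
  assumes "arborescence V E tail head r depth" and "unit_edge_quasimetric V E tail head d"
    and "\<And>x. x \<in> V \<Longrightarrow> 0 \<le> \<mu> x" "\<And>x. x \<in> V \<Longrightarrow> 0 \<le> \<nu> x" "sum \<mu> V = sum \<nu> V"
  shows "\<exists>\<pi>. coupling V \<mu> \<nu> \<pi> \<and> coupling_cost V d \<pi> \<le> tree_W1 V E tail head \<mu> \<nu>"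
  using assms
proof (induction "card E" arbitrary: V E d \<mu> \<nu>)
  case 0
  interpret arborescence V E tail head r depth by fact
  have "E = {}" using 0 finite_E by simp
  then have V: "V = {r}" using head_image root_in_V by auto
  let ?\<pi> = "\<lambda>x y. if x = r \<and> y = r then \<mu> r else 0"
  have "coupling V \<mu> \<nu> ?\<pi>" using "0.prems" V by (auto simp: coupling_def)
  moreover have "coupling_cost V d ?\<pi> = 0"
    using "0.prems"(2) V by (simp add: coupling_cost_def unit_edge_quasimetric_def)
  moreover have "tree_W1 V E tail head \<mu> \<nu> = 0" using \<open>E = {}\<close> by (simp add: tree_W1_def)
  ultimately show ?case by auto
next
  case (Suc n)
  interpret arborescence V E tail head r depth by fact
  have "E \<noteq> {}" using Suc.hyps(2) by auto
  then obtain k0 where k0: "k0 \<in> E" and leaf: "\<And>k. k \<in> E \<Longrightarrow> tail k \<noteq> head k0"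
    using exists_leaf_edge by blast
  have oriented: "\<exists>\<pi>. coupling V \<mu> \<nu> \<pi> \<and> coupling_cost V d \<pi> \<le> tree_W1 V E tail head \<mu> \<nu>"
    if d: "unit_edge_quasimetric V E tail head d" and \<mu>: "\<And>x. x \<in> V \<Longrightarrow> 0 \<le> \<mu> x"
      and \<nu>: "\<And>x. x \<in> V \<Longrightarrow> 0 \<le> \<nu> x" and sums: "sum \<mu> V = sum \<nu> V"
      and le: "\<nu> (head k0) \<le> \<mu> (head k0)" for d \<mu> \<nu>
  proof -
    let ?\<mu>' = "\<mu>(tail k0 := \<mu> (tail k0) + (\<mu> (head k0) - \<nu> (head k0)))"
    have in_V: "head k0 \<in> V" "tail k0 \<in> V - {head k0}" using k0 leaf head_in_V tail_in_V by auto
    have "\<exists>\<pi>. coupling (V - {head k0}) ?\<mu>' \<nu> \<pi> \<and>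
        coupling_cost (V - {head k0}) d \<pi> \<le> tree_W1 (V - {head k0}) (E - {k0}) tail head ?\<mu>' \<nu>"
    proof (rule Suc.hyps(1))
      show "n = card (E - {k0})" using Suc.hyps(2) k0 finite_E by simp
      show "arborescence (V - {head k0}) (E - {k0}) tail head r depth"
        by (rule arborescence_remove_leaf[OF k0 leaf])
      show "unit_edge_quasimetric (V - {head k0}) (E - {k0}) tail head d"
        using d by (rule unit_edge_quasimetric_subset) auto
      show "sum ?\<mu>' (V - {head k0}) = sum \<nu> (V - {head k0})"
        using sum_fun_upd_add[of "V - {head k0}" \<mu>] finite_V in_V sums
        by (simp add: sum_diff1)
    qed (use \<mu> \<nu> le in_V in auto)
    then obtain \<pi> where "coupling (V - {head k0}) ?\<mu>' \<nu> \<pi>"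
      "coupling_cost (V - {head k0}) d \<pi> \<le> tree_W1 (V - {head k0}) (E - {k0}) tail head ?\<mu>' \<nu>"
      by blast
    then show ?thesis by (intro exists_coupling_extend_leaf[OF k0 leaf] d \<mu> \<nu> le)
  qed
  show ?case
  proof (cases "\<nu> (head k0) \<le> \<mu> (head k0)")
    case True
    show ?thesis by (rule oriented) (use Suc.prems True in auto)
  next
    case False
    show ?thesis
      by (rule exists_coupling_transpose, rule oriented)
        (use unit_edge_quasimetric_transpose[OF Suc.prems(2)] Suc.prems False in auto)
  qed
qed

context arborescence
begin

lemma gdist_unit_edge_quasimetric:
  "unit_edge_quasimetric V E tail head (\<lambda>x y. real (gdist E tail head x y))"
  unfolding unit_edge_quasimetric_def
proof (intro conjI ballI)
  fix x y z assume xyz: "x \<in> V" "y \<in> V" "z \<in> V"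
  have "(x, y) \<in> (uadj E tail head) ^^ gdist E tail head x y"
    "(y, z) \<in> (uadj E tail head) ^^ gdist E tail head y z"
    using gdist_relpow[OF uadj_connected[OF xyz(1,2)]] gdist_relpow[OF uadj_connected[OF xyz(2,3)]] .
  then have "(x, z) \<in> (uadj E tail head) ^^ (gdist E tail head x y + gdist E tail head y z)"
    by (auto simp: relpow_add)
  then show "real (gdist E tail head x z) \<le> real (gdist E tail head x y) + real (gdist E tail head y z)"
    using gdist_le by fastforce
next
  fix k assume "k \<in> E"
  then have "(tail k, head k) \<in> (uadj E tail head) ^^ 1" by (auto simp: uadj_def)
  then show "real (gdist E tail head (tail k) (head k)) \<le> 1" using gdist_le by fastforce
next
  fix k assume "k \<in> E"
  then have "(head k, tail k) \<in> (uadj E tail head) ^^ 1" by (auto simp: uadj_def)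
  then show "real (gdist E tail head (head k) (tail k)) \<le> 1" using gdist_le by fastforce
qed (simp add: gdist_refl)

text \<open>Of the subtrees U (head k), only the one below the crossed edge separates its endpoints.\<close>
lemma sum_indicator_subtree_diff_uadj:
  assumes "(z, y) \<in> uadj E tail head"
  shows "(\<Sum>k\<in>E. \<bar>indicator (U (head k)) z - indicator (U (head k)) y\<bar>) \<le> (1::real)"
proof -
  obtain k0 where k0: "k0 \<in> E" "{z, y} = {tail k0, head k0}"
    using assms by (auto simp: uadj_def)
  have "(\<Sum>k\<in>E. \<bar>indicator (U (head k)) z - indicator (U (head k)) y\<bar>) =
      \<bar>indicator (U (head k0)) z - indicator (U (head k0)) y\<bar> +
      (\<Sum>k\<in>E - {k0}. \<bar>indicator (U (head k)) z - indicator (U (head k)) y :: real\<bar>)"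
    by (rule sum.remove[OF finite_E k0(1)])
  also have "(\<Sum>k\<in>E - {k0}. \<bar>indicator (U (head k)) z - indicator (U (head k)) y :: real\<bar>) = 0"
    using k0 subtree_tail_iff_head[of k0] by (intro sum.neutral) (auto simp: doubleton_eq_iff indicator_def)
  also have "\<bar>indicator (U (head k0)) z - indicator (U (head k0)) y\<bar> + 0 \<le> (1::real)"
    by (simp add: indicator_def)
  finally show ?thesis .
qed

lemma sum_indicator_subtree_diff_le_gdist:
  assumes "x \<in> V" "y \<in> V"
  shows "(\<Sum>k\<in>E. \<bar>indicator (U (head k)) x - indicator (U (head k)) y\<bar>) \<le> real (gdist E tail head x y)"
proof -
  have "(\<Sum>k\<in>E. \<bar>indicator (U (head k)) x - indicator (U (head k)) y\<bar>) \<le> real n"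
    if "(x, y) \<in> (uadj E tail head) ^^ n" for n
    using that
  proof (induction n arbitrary: y)
    case (Suc n)
    then obtain z where z: "(x, z) \<in> (uadj E tail head) ^^ n" "(z, y) \<in> uadj E tail head" by auto
    have "(\<Sum>k\<in>E. \<bar>indicator (U (head k)) x - indicator (U (head k)) y\<bar>) \<le>
        (\<Sum>k\<in>E. \<bar>indicator (U (head k)) x - indicator (U (head k)) z\<bar>) +
        (\<Sum>k\<in>E. \<bar>indicator (U (head k)) z - indicator (U (head k)) y\<bar> :: real)"
      by (simp add: sum.distrib[symmetric] sum_mono abs_triangle_ineq4)
    also have "\<dots> \<le> real n + 1"
      using Suc.IH[OF z(1)] sum_indicator_subtree_diff_uadj[OF z(2)] by linarith
    finally show ?case by simp
  qed simp
  then show ?thesis using gdist_relpow[OF uadj_connected[OF assms]] .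
qed

lemma subtree_mass_eq_sum_indicator: "mass \<mu> x = (\<Sum>y\<in>V. indicator (U x) y * \<mu> y)"
proof -
  have "(\<Sum>y\<in>V. indicator (U x) y * \<mu> y) = sum \<mu> (V \<inter> U x)"
    by (rule Indicator_Function.sum_indicator_mult[OF finite_V])
  then show ?thesis using subtree_subset by (simp add: subtree_mass_def Int_absorb1)
qed

lemma subtree_mass_diff_eq_coupling_sum:
  assumes "coupling V \<mu> \<nu> \<pi>"
  shows "mass \<mu> x - mass \<nu> x = (\<Sum>a\<in>V. \<Sum>b\<in>V. (indicator (U x) a - indicator (U x) b) * \<pi> a b)"
proof -
  have rows: "\<And>a. a \<in> V \<Longrightarrow> (\<Sum>b\<in>V. \<pi> a b) = \<mu> a" and cols: "\<And>b. b \<in> V \<Longrightarrow> (\<Sum>a\<in>V. \<pi> a b) = \<nu> b"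
    using assms by (auto simp: coupling_def)
  have "mass \<mu> x = (\<Sum>a\<in>V. indicator (U x) a * (\<Sum>b\<in>V. \<pi> a b))"
    unfolding subtree_mass_eq_sum_indicator using rows by (intro sum.cong) auto
  then have \<mu>: "mass \<mu> x = (\<Sum>a\<in>V. \<Sum>b\<in>V. indicator (U x) a * \<pi> a b)"
    by (simp add: sum_distrib_left)
  have "mass \<nu> x = (\<Sum>b\<in>V. indicator (U x) b * (\<Sum>a\<in>V. \<pi> a b))"
    unfolding subtree_mass_eq_sum_indicator using cols by (intro sum.cong) auto
  also have "\<dots> = (\<Sum>b\<in>V. \<Sum>a\<in>V. indicator (U x) b * \<pi> a b)"
    by (simp add: sum_distrib_left)
  also have "\<dots> = (\<Sum>a\<in>V. \<Sum>b\<in>V. indicator (U x) b * \<pi> a b)"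
    by (rule sum.swap)
  finally show ?thesis
    using \<mu> by (simp add: sum_subtractf left_diff_distrib)
qed

lemma tree_W1_le_coupling_cost:
  assumes cp: "coupling V \<mu> \<nu> \<pi>"
  shows "tree_W1 V E tail head \<mu> \<nu> \<le> coupling_cost V (\<lambda>x y. real (gdist E tail head x y)) \<pi>"
proof -
  let ?\<chi> = "\<lambda>k x. indicator (U (head k)) x :: real"
  have nonneg: "\<And>a b. a \<in> V \<Longrightarrow> b \<in> V \<Longrightarrow> 0 \<le> \<pi> a b" using cp by (auto simp: coupling_def)
  have "tree_W1 V E tail head \<mu> \<nu> = (\<Sum>k\<in>E. \<bar>\<Sum>a\<in>V. \<Sum>b\<in>V. (?\<chi> k a - ?\<chi> k b) * \<pi> a b\<bar>)"
    unfolding tree_W1_def using subtree_mass_diff_eq_coupling_sum[OF cp] by simp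
  also have "\<dots> \<le> (\<Sum>k\<in>E. \<Sum>a\<in>V. \<Sum>b\<in>V. \<bar>?\<chi> k a - ?\<chi> k b\<bar> * \<pi> a b)"
  proof (intro sum_mono)
    fix k
    have "\<bar>\<Sum>a\<in>V. \<Sum>b\<in>V. (?\<chi> k a - ?\<chi> k b) * \<pi> a b\<bar> \<le> (\<Sum>a\<in>V. \<Sum>b\<in>V. \<bar>(?\<chi> k a - ?\<chi> k b) * \<pi> a b\<bar>)"
      by (rule order_trans[OF sum_abs sum_mono[OF sum_abs]])
    also have "\<dots> = (\<Sum>a\<in>V. \<Sum>b\<in>V. \<bar>?\<chi> k a - ?\<chi> k b\<bar> * \<pi> a b)"
      using nonneg by (intro sum.cong refl) (simp add: abs_mult)
    finally show "\<bar>\<Sum>a\<in>V. \<Sum>b\<in>V. (?\<chi> k a - ?\<chi> k b) * \<pi> a b\<bar> \<le> (\<Sum>a\<in>V. \<Sum>b\<in>V. \<bar>?\<chi> k a - ?\<chi> k b\<bar> * \<pi> a b)" .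
  qed
  also have "\<dots> = (\<Sum>a\<in>V. \<Sum>k\<in>E. \<Sum>b\<in>V. \<bar>?\<chi> k a - ?\<chi> k b\<bar> * \<pi> a b)"
    by (rule sum.swap)
  also have "\<dots> = (\<Sum>a\<in>V. \<Sum>b\<in>V. (\<Sum>k\<in>E. \<bar>?\<chi> k a - ?\<chi> k b\<bar>) * \<pi> a b)"
    by (simp add: sum.swap[of _ E V] sum_distrib_right)
  also have "\<dots> \<le> coupling_cost V (\<lambda>x y. real (gdist E tail head x y)) \<pi>"
    unfolding coupling_cost_def using sum_indicator_subtree_diff_le_gdist nonneg
    by (intro sum_mono mult_right_mono) auto
  finally show ?thesis .
qed

lemma W1_eq_tree_W1:
  assumes "\<And>x. x \<in> V \<Longrightarrow> 0 \<le> \<mu> x" "\<And>x. x \<in> V \<Longrightarrow> 0 \<le> \<nu> x" "sum \<mu> V = sum \<nu> V"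
  shows "W1 V E tail head \<mu> \<nu> = tree_W1 V E tail head \<mu> \<nu>"
proof -
  let ?d = "\<lambda>x y. real (gdist E tail head x y)"
  obtain \<pi> where cp: "coupling V \<mu> \<nu> \<pi>" and "coupling_cost V ?d \<pi> \<le> tree_W1 V E tail head \<mu> \<nu>"
    using exists_coupling_cost_le_tree_W1[OF arborescence_axioms gdist_unit_edge_quasimetric assms] by blast
  then have "coupling_cost V ?d \<pi> = tree_W1 V E tail head \<mu> \<nu>"
    using tree_W1_le_coupling_cost[OF cp] by linarith
  then show ?thesis
    unfolding W1_def
  proof (intro cInf_eq_minimum)
    show "tree_W1 V E tail head \<mu> \<nu> \<in> {\<Sum>x\<in>V. \<Sum>y\<in>V. ?d x y * \<pi> x y | \<pi>. coupling V \<mu> \<nu> \<pi>}"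
      if "coupling_cost V ?d \<pi> = tree_W1 V E tail head \<mu> \<nu>"
      by (intro CollectI exI[of _ \<pi>]) (use that cp in \<open>simp add: coupling_cost_def\<close>)
  next
    fix c assume "c \<in> {\<Sum>x\<in>V. \<Sum>y\<in>V. ?d x y * \<pi> x y | \<pi>. coupling V \<mu> \<nu> \<pi>}"
    then obtain \<pi>' where "coupling V \<mu> \<nu> \<pi>'" "c = coupling_cost V ?d \<pi>'"
      unfolding coupling_cost_def by blast
    then show "tree_W1 V E tail head \<mu> \<nu> \<le> c" using tree_W1_le_coupling_cost by simp
  qed
qed

lemma W1_pos:
  assumes \<mu>: "probvec V \<mu>" and \<nu>: "probvec V \<nu>" and "\<mu> \<noteq> \<nu>"
  shows "0 < W1 V E tail head \<mu> \<nu>"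
proof (rule ccontr)
  assume "\<not> 0 < W1 V E tail head \<mu> \<nu>"
  moreover have "W1 V E tail head \<mu> \<nu> = tree_W1 V E tail head \<mu> \<nu>"
    using \<mu> \<nu> by (intro W1_eq_tree_W1) (auto simp: probvec_def)
  moreover have "0 \<le> tree_W1 V E tail head \<mu> \<nu>" by (simp add: tree_W1_def sum_nonneg)
  ultimately have "(\<Sum>k\<in>E. \<bar>mass \<mu> (head k) - mass \<nu> (head k)\<bar>) = 0"
    unfolding tree_W1_def by linarith
  then have heads: "\<And>k. k \<in> E \<Longrightarrow> mass \<mu> (head k) = mass \<nu> (head k)"
    by (simp add: sum_nonneg_eq_0_iff[OF finite_E])
  have masses: "mass \<mu> x = mass \<nu> x" if "x \<in> V" for x
  proof (cases "x = r")
    case True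
    then show ?thesis using \<mu> \<nu> by (simp add: subtree_mass_root probvec_def)
  next
    case False
    then have "x \<in> head ` E" using that head_image by simp
    then show ?thesis using heads by auto
  qed
  have "\<mu> x = \<nu> x" for x
  proof (cases "x \<in> V")
    case True
    show ?thesis by (rule subtree_masses_eq_imp_eq[of \<mu> \<nu>]) (use masses True in auto)
  qed (use \<mu> \<nu> in \<open>simp add: probvec_def\<close>)
  with \<open>\<mu> \<noteq> \<nu>\<close> show False by auto
qed

end

section \<open>Curves of probability vectors\<close>

lemma difference_quotient_tendsto_within:
  fixes G :: "real \<Rightarrow> real"
  assumes "(G has_real_derivative D) (at t within S)"
  shows "((\<lambda>h. (G (t + h) - G t) / h) \<longlongrightarrow> D) (at 0 within {h. t + h \<in> S})"
proof -
  have "((\<lambda>y. (G y - G t) / (y - t)) \<longlongrightarrow> D) (at t within S)"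
    using assms by (simp add: has_field_derivative_iff)
  moreover have "filterlim (\<lambda>h. t + h) (at t within S) (at 0 within {h. t + h \<in> S})"
    unfolding filterlim_at
  proof
    show "\<forall>\<^sub>F h in at 0 within {h. t + h \<in> S}. t + h \<in> S \<and> t + h \<noteq> t"
      by (simp add: eventually_at_filter)
    have "((\<lambda>h. t + h) \<longlongrightarrow> t + 0) (at 0 within {h. t + h \<in> S})"
      by (intro tendsto_intros)
    then show "((\<lambda>h. t + h) \<longlongrightarrow> t) (at 0 within {h. t + h \<in> S})" by simp
  qed
  ultimately have "((\<lambda>h. (G (t + h) - G t) / ((t + h) - t)) \<longlongrightarrow> D) (at 0 within {h. t + h \<in> S})"
    by (rule filterlim_compose)
  then show ?thesis by simp
qed

lemma at_0_within_shifted_unit_interval_nontrivial: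
  assumes "t \<in> {0..1::real}"
  shows "at 0 within {h. t + h \<in> {0..1}} \<noteq> bot"
  unfolding not_trivial_limit_within_ball
proof (intro allI impI)
  fix e :: real assume "e > 0"
  define h where "h = (if t \<le> 1/2 then min (e/2) (1/2) else - min (e/2) (1/2))"
  have "h \<in> {h. t + h \<in> {0..1}} \<inter> ball 0 e - {0}"
    using assms \<open>e > 0\<close> by (auto simp: h_def dist_real_def)
  then show "{h. t + h \<in> {0..1}} \<inter> ball 0 e - {0} \<noteq> {}" by blast
qed

lemma W1_geodesic_speed:
  assumes "W1_geodesic V E tail head f" "t \<in> {0..1}" "has_W1_speed V E tail head f t c"
  shows "c = W1 V E tail head (f 0) (f 1)"
proof -
  let ?W = "W1 V E tail head (f 0) (f 1)"
  have "\<forall>\<^sub>F h in at 0 within {h. t + h \<in> {0..1}}. W1 V E tail head (f (t + h)) (f t) / \<bar>h\<bar> = ?W"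
    unfolding eventually_at_filter
  proof (rule always_eventually, intro allI impI)
    fix h :: real assume "h \<noteq> 0" "h \<in> {h. t + h \<in> {0..1}}"
    then have "W1 V E tail head (f (t + h)) (f t) = \<bar>t + h - t\<bar> * ?W"
      using assms(1,2) unfolding W1_geodesic_def by blast
    then show "W1 V E tail head (f (t + h)) (f t) / \<bar>h\<bar> = ?W"
      using \<open>h \<noteq> 0\<close> by simp
  qed
  then have "((\<lambda>h. W1 V E tail head (f (t + h)) (f t) / \<bar>h\<bar>) \<longlongrightarrow> ?W) (at 0 within {h. t + h \<in> {0..1}})"
    by (rule tendsto_eventually)
  with assms(3) show ?thesis
    unfolding has_W1_speed_def
    using tendsto_unique[OF at_0_within_shifted_unit_interval_nontrivial[OF assms(2)]] by blast
qed

lemma abs_cont_on_lipschitz: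
  assumes "B > 0" and lip: "\<And>x y. x \<in> S \<Longrightarrow> y \<in> S \<Longrightarrow> \<bar>h y - h x\<bar> \<le> B * \<bar>y - x\<bar>"
  shows "abs_cont_on S h"
  unfolding abs_cont_on_def
proof (intro allI impI exI conjI)
  fix \<epsilon> :: real and n and a b :: "nat \<Rightarrow> real"
  assume "\<epsilon> > 0"
  then show "\<epsilon> / B > 0" using \<open>B > 0\<close> by simp
  assume H: "(\<forall>i<n. a i \<in> S \<and> b i \<in> S \<and> a i \<le> b i) \<and>
    (\<forall>i<n. \<forall>j<n. i \<noteq> j \<longrightarrow> b i \<le> a j \<or> b j \<le> a i) \<and> (\<Sum>i<n. b i - a i) < \<epsilon> / B"
  have "(\<Sum>i<n. \<bar>h (b i) - h (a i)\<bar>) \<le> (\<Sum>i<n. B * (b i - a i))"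
    using H lip by (intro sum_mono) fastforce
  also have "\<dots> = B * (\<Sum>i<n. b i - a i)" by (simp add: sum_distrib_left)
  also have "\<dots> < \<epsilon>" using H \<open>B > 0\<close> by (simp add: pos_less_divide_eq mult.commute)
  finally show "(\<Sum>i<n. \<bar>h (b i) - h (a i)\<bar>) < \<epsilon>" .
qed

lemma abs_cont_on_C1:
  fixes h h' :: "real \<Rightarrow> real"
  assumes "\<And>t. t \<in> {a..b} \<Longrightarrow> (h has_real_derivative h' t) (at t within {a..b})"
    and "continuous_on {a..b} h'"
  shows "abs_cont_on {a..b} h"
proof -
  have "bounded (h' ` {a..b})" by (intro compact_imp_bounded compact_continuous_image assms(2)) simp
  then obtain B where "B > 0" "\<And>t. t \<in> {a..b} \<Longrightarrow> \<bar>h' t\<bar> \<le> B" unfolding bounded_pos by auto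
  then show ?thesis
    using field_differentiable_bound[of "{a..b}" h h' B] assms(1) by (intro abs_cont_on_lipschitz) auto
qed

lemma continuous_on_imp_measurable_restrict_lborel:
  fixes h :: "real \<Rightarrow> real"
  assumes "continuous_on S h"
  shows "h \<in> borel_measurable (restrict_space lborel S)"
proof -
  have "sets (restrict_space lborel S) = sets (restrict_space borel S)"
    by (rule sets_restrict_space_cong) simp
  then show ?thesis
    using borel_measurable_continuous_on_restrict[OF assms] measurable_cong_sets by blast
qed

lemma probvec_normalized_abs:
  assumes "finite E" "(\<Sum>k\<in>E. \<bar>a k\<bar>) = c" "0 < c"
  shows "probvec E (\<lambda>k. if k \<in> E then \<bar>a k\<bar> / c else 0)"
  using assms by (simp add: probvec_def flip: sum_divide_distrib)

lemma action_I_constant_speed: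
  assumes "\<And>t. t \<in> {0..1} \<Longrightarrow> s t = W" "\<And>t. t \<in> {0..1} \<Longrightarrow> (\<Sum>k\<in>E. \<bar>a t k\<bar>) = W"
    and "0 < W" "1 \<le> q"
  shows "action_I E q (\<lambda>t k. sgn (a t k) * s t) (\<lambda>t k. if k \<in> E then \<bar>a t k\<bar> / s t else 0) = W"
proof -
  have "(\<Sum>k\<in>E. (if k \<in> E then \<bar>a t k\<bar> / s t else 0) * \<bar>sgn (a t k) * s t\<bar> powr q) = W powr q"
    if "t \<in> {0..1}" for t
  proof -
    have "(\<Sum>k\<in>E. (if k \<in> E then \<bar>a t k\<bar> / s t else 0) * \<bar>sgn (a t k) * s t\<bar> powr q)
        = (\<Sum>k\<in>E. \<bar>a t k\<bar>) / W * W powr q"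
      using assms(1)[OF that] \<open>0 < W\<close>
      by (auto simp: sum_divide_distrib sum_distrib_right abs_mult sgn_if intro!: sum.cong)
    then show ?thesis using assms(2)[OF that] \<open>0 < W\<close> by simp
  qed
  then have "integral {0..1} (\<lambda>t. \<Sum>k\<in>E. (if k \<in> E then \<bar>a t k\<bar> / s t else 0) * \<bar>sgn (a t k) * s t\<bar> powr q)
      = W powr q"
    using integral_cong[of "{0..1::real}" _ "\<lambda>_. W powr q"] by simp
  then show ?thesis
    using assms(3,4) by (simp add: action_I_def powr_powr)
qed

locale tree_curve = arborescence V E tail head r depth
  for V :: "'a set" and E :: "'e set" and tail head :: "'e \<Rightarrow> 'a" and r depth +
  fixes f f' :: "real \<Rightarrow> 'a \<Rightarrow> real"
  assumes prob: "\<And>t. t \<in> {0..1} \<Longrightarrow> probvec V (f t)"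
    and deriv: "\<And>x t. x \<in> V \<Longrightarrow> t \<in> {0..1} \<Longrightarrow>
      ((\<lambda>\<tau>. f \<tau> x) has_real_derivative f' t x) (at t within {0..1})"
    and cont: "\<And>x. x \<in> V \<Longrightarrow> continuous_on {0..1} (\<lambda>t. f' t x)"
begin

lemma subtree_mass_has_derivative:
  "t \<in> {0..1} \<Longrightarrow> ((\<lambda>\<tau>. mass (f \<tau>) x) has_real_derivative mass (f' t) x) (at t within {0..1})"
  unfolding subtree_mass_def using subtree_subset by (intro DERIV_sum deriv) auto

lemma continuous_on_flux: "continuous_on {0..1} (\<lambda>t. mass (f' t) x)"
  unfolding subtree_mass_def using subtree_subset by (intro continuous_on_sum cont) auto

lemma flux_root_eq_0:
  assumes t: "t \<in> {0..1}"
  shows "mass (f' t) r = 0"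
proof -
  have "((\<lambda>\<tau>. mass (f \<tau>) r) has_real_derivative 0) (at t within {0..1})"
    by (rule has_field_derivative_transform_within[of "\<lambda>_. 1" 0 t "{0..1}" 1])
      (use t prob in \<open>auto simp: subtree_mass_root probvec_def\<close>)
  moreover have "at t within {0..1} \<noteq> bot"
    using t by (simp add: trivial_limit_within islimpt_Icc)
  ultimately show ?thesis
    using has_field_derivative_unique subtree_mass_has_derivative[OF t] by blast
qed

lemma speed_eq_sum_edges:
  "t \<in> {0..1} \<Longrightarrow> (\<Sum>x\<in>V. \<bar>mass (f' t) x\<bar>) = (\<Sum>k\<in>E. \<bar>mass (f' t) (head k)\<bar>)"
  using sum_vertices_eq_root_plus_heads[of "\<lambda>x. \<bar>mass (f' t) x\<bar>"] flux_root_eq_0 by simp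

lemma has_W1_speed_flux:
  assumes t: "t \<in> {0..1}"
  shows "has_W1_speed V E tail head f t (\<Sum>x\<in>V. \<bar>mass (f' t) x\<bar>)"
proof -
  let ?H = "{h. t + h \<in> {0..1}}"
  have lim: "((\<lambda>h. \<Sum>k\<in>E. \<bar>(mass (f (t + h)) (head k) - mass (f t) (head k)) / h\<bar>)
      \<longlongrightarrow> (\<Sum>k\<in>E. \<bar>mass (f' t) (head k)\<bar>)) (at 0 within ?H)"
    by (intro tendsto_sum tendsto_rabs difference_quotient_tendsto_within subtree_mass_has_derivative t)
  have ev: "\<forall>\<^sub>F h in at 0 within ?H. (\<Sum>k\<in>E. \<bar>(mass (f (t + h)) (head k) - mass (f t) (head k)) / h\<bar>) =
      W1 V E tail head (f (t + h)) (f t) / \<bar>h\<bar>"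
    unfolding eventually_at_filter
  proof (rule always_eventually, intro allI impI)
    fix h :: real assume "h \<in> ?H"
    then have "W1 V E tail head (f (t + h)) (f t) = tree_W1 V E tail head (f (t + h)) (f t)"
      using prob t by (intro W1_eq_tree_W1) (auto simp: probvec_def)
    then show "(\<Sum>k\<in>E. \<bar>(mass (f (t + h)) (head k) - mass (f t) (head k)) / h\<bar>) =
        W1 V E tail head (f (t + h)) (f t) / \<bar>h\<bar>"
      by (simp add: tree_W1_def sum_divide_distrib abs_divide)
  qed
  show ?thesis
    unfolding has_W1_speed_def speed_eq_sum_edges[OF t] by (rule Lim_transform_eventually[OF lim ev])
qed

lemma flux_incidence:
  assumes "t \<in> {0..1}" "x \<in> V"
  shows "f' t x = (\<Sum>k\<in>E. incid tail head x k * mass (f' t) (head k))"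
proof -
  have "sum (f' t) V = 0" using flux_root_eq_0[OF assms(1)] by (simp add: subtree_mass_root)
  then show ?thesis by (rule incidence_subtree_mass[OF assms(2)])
qed

lemma transport_eq_flux:
  assumes s: "s = (\<lambda>t. \<Sum>x\<in>V. \<bar>mass (f' t) x\<bar>)" and pos: "\<And>t. t \<in> {0..1} \<Longrightarrow> 0 < s t"
  shows "transport_eq V E tail head f (\<lambda>t k. sgn (mass (f' t) (head k)) * s t)
    (\<lambda>t k. if k \<in> E then \<bar>mass (f' t) (head k)\<bar> / s t else 0)"
  unfolding transport_eq_def
proof (intro conjI)
  let ?g = "\<lambda>t k. if k \<in> E then \<bar>mass (f' t) (head k)\<bar> / s t else 0"
  have meas_flux: "(\<lambda>t. mass (f' t) x) \<in> borel_measurable (restrict_space lborel {0..1})" for x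
    by (rule continuous_on_imp_measurable_restrict_lborel[OF continuous_on_flux])
  have meas_s: "s \<in> borel_measurable (restrict_space lborel {0..1})"
    unfolding s using continuous_on_flux
    by (intro continuous_on_imp_measurable_restrict_lborel continuous_on_sum continuous_on_rabs)
  show "\<forall>t\<in>{0..1}. probvec V (f t)" using prob by blast
  show "\<forall>x\<in>V. abs_cont_on {0..1} (\<lambda>t. f t x)"
    using deriv cont by (auto intro!: abs_cont_on_C1[where h' = "\<lambda>t. f' t _"])
  show "\<forall>k\<in>E. (\<lambda>t. sgn (mass (f' t) (head k)) * s t) \<in> borel_measurable (restrict_space lborel {0..1})"
    using meas_flux meas_s by (auto intro!: borel_measurable_times measurable_compose[OF _ borel_measurable_sgn])
  show "\<forall>k\<in>E. (\<lambda>t. ?g t k) \<in> borel_measurable (restrict_space lborel {0..1})"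
    using meas_flux meas_s by (auto intro!: borel_measurable_divide borel_measurable_abs)
  show "\<forall>t\<in>{0..1}. probvec E (?g t)"
  proof
    fix t :: real assume t: "t \<in> {0..1}"
    show "probvec E (?g t)"
      by (rule probvec_normalized_abs[OF finite_E]) (use speed_eq_sum_edges[OF t] pos[OF t] s in auto)
  qed
  have "f' t x = (\<Sum>k\<in>E. incid tail head x k * (sgn (mass (f' t) (head k)) * s t) * ?g t k)"
    if t: "t \<in> {0..1}" and x: "x \<in> V" for t x
    unfolding flux_incidence[OF t x] using pos[OF t] by (intro sum.cong) (auto simp: sgn_if)
  then show "AE t in lborel. t \<in> {0..1} \<longrightarrow> (\<forall>x\<in>V. ((\<lambda>\<tau>. f \<tau> x) has_real_derivative
      (\<Sum>k\<in>E. incid tail head x k * (sgn (mass (f' t) (head k)) * s t) * ?g t k)) (at t within {0..1}))"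
    using deriv by (intro always_eventually) auto
qed

lemma geodesic_constant_speed_solution:
  assumes s: "s = (\<lambda>t. \<Sum>x\<in>V. \<bar>mass (f' t) x\<bar>)"
    and geo: "W1_geodesic V E tail head f" and ends: "f 0 \<noteq> f 1"
  defines "v \<equiv> \<lambda>t k. sgn (mass (f' t) (head k)) * s t"
    and "g \<equiv> \<lambda>t k. if k \<in> E then \<bar>mass (f' t) (head k)\<bar> / s t else 0"
  shows "(\<forall>t\<in>{0..1}. s t = W1 V E tail head (f 0) (f 1)) \<and> 0 < W1 V E tail head (f 0) (f 1) \<and>
    transport_eq V E tail head f v g \<and> (\<forall>q. 1 \<le> q \<longrightarrow> action_I E q v g = W1 V E tail head (f 0) (f 1))"
proof -
  let ?W = "W1 V E tail head (f 0) (f 1)"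
  have sW: "\<And>t. t \<in> {0..1} \<Longrightarrow> s t = ?W"
    using W1_geodesic_speed[OF geo] has_W1_speed_flux s by blast
  moreover have "0 < ?W" using W1_pos prob ends by simp
  moreover have "transport_eq V E tail head f v g"
    unfolding v_def g_def using transport_eq_flux[OF s] sW \<open>0 < ?W\<close> by simp
  moreover have "action_I E q v g = ?W" if "1 \<le> q" for q
    unfolding v_def g_def using sW speed_eq_sum_edges \<open>0 < ?W\<close> that s
    by (intro action_I_constant_speed[where a = "\<lambda>t k. mass (f' t) (head k)"]) auto
  ultimately show ?thesis by blast
qed

end

theorem mainTheorem2:
  fixes V :: "'a set" and E :: "'e set" and tail head :: "'e \<Rightarrow> 'a" and r :: 'a
    and f f' :: "real \<Rightarrow> 'a \<Rightarrow> real"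
  assumes tree: "rooted_tree_away V E tail head r"
    and prob: "\<forall>t\<in>{0..1}. probvec V (f t)"
    and deriv: "\<forall>x\<in>V. \<forall>t\<in>{0..1}. ((\<lambda>\<tau>. f \<tau> x) has_real_derivative f' t x) (at t within {0..1})"
    and cont: "\<forall>x\<in>V. continuous_on {0..1} (\<lambda>t. f' t x)"
  defines "F' \<equiv> \<lambda>t x. \<Sum>y\<in>subtree V E tail head x. f' t y"
    and "s \<equiv> \<lambda>t. \<Sum>x\<in>V. \<bar>\<Sum>y\<in>subtree V E tail head x. f' t y\<bar>"
  shows "(\<forall>t\<in>{0..1}. has_W1_speed V E tail head f t (s t)) \<and>
    ((W1_geodesic V E tail head f \<and> f 0 \<noteq> f 1) \<longrightarrow>
      (let v = (\<lambda>t k. sgn (F' t (head k)) * s t);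
           g = (\<lambda>t k. if k \<in> E then \<bar>F' t (head k)\<bar> / s t else 0)
       in (\<forall>t\<in>{0..1}. s t = W1 V E tail head (f 0) (f 1)) \<and> W1 V E tail head (f 0) (f 1) > 0 \<and>
          transport_eq V E tail head f v g \<and>
          (\<forall>q::real. q \<ge> 1 \<longrightarrow> action_I E q v g = W1 V E tail head (f 0) (f 1))))"
proof -
  interpret tree_curve V E tail head r "gdist E tail head r" f f'
    using rooted_tree_away_imp_arborescence[OF tree] prob deriv cont
    by (simp add: tree_curve_def tree_curve_axioms_def)
  have F': "F' = (\<lambda>t. mass (f' t))" and s: "s = (\<lambda>t. \<Sum>x\<in>V. \<bar>mass (f' t) x\<bar>)"
    by (simp_all add: F'_def s_def subtree_mass_def fun_eq_iff)
  show ?thesis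
    unfolding Let_def F' using has_W1_speed_flux geodesic_constant_speed_solution[OF s] by (simp add: s)
qed

end
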